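(* Let $U\subseteq\mathbb{C}$ be open, let $f \in \operatorname{Hol}(U,\mathbb{C}_+)$, and let $y_0 \in U\cap\mathbb{R}$ with $f(y_0) \in \mathbb{C}_+$. Then there exists an open neighbourhood $\Omega$ of $(0, y_0)$ in $\mathbb{R}^2$ on which the equation $\lambda(x,y) = f(y - \lambda(x,y)\,x)$ has a unique $C^1$ solution $\lambda\colon \Omega \to \mathbb{C}_+$.
   Context: $\mathbb{C}_+$ is the upper half-plane and $\operatorname{Hol}(U,\mathbb{C}_+)$ the set of holomorphic functions $U\to\mathbb{C}_+$. *)

theory Defs
  imports "HOL-Analysis.Analysis"
begin

definition C1_on :: "('a::real_normed_vector) set \<Rightarrow> ('a \<Rightarrow> 'b::real_normed_vector) \<Rightarrow> bool" where
  "C1_on S g \<longleftrightarrow> (\<exists>g'. (\<forall>p\<in>S. (g has_derivative blinfun_apply (g' p)) (at p)) \<and> continuous_on S g')"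

definition upper_half_plane :: "complex set" where
  "upper_half_plane = {z. Im z > 0}"

definition is_C1_solution ::
    "(complex \<Rightarrow> complex) \<Rightarrow> complex set \<Rightarrow> (real \<times> real) set \<Rightarrow> (real \<times> real \<Rightarrow> complex) \<Rightarrow> bool" where
  "is_C1_solution f U \<Omega> lam \<longleftrightarrow>
     C1_on \<Omega> lam \<and>
     (\<forall>p\<in>\<Omega>. lam p \<in> upper_half_plane) \<and>
     (\<forall>x y. (x, y) \<in> \<Omega> \<longrightarrow>
        complex_of_real y - lam (x, y) * complex_of_real x \<in> U \<and>
        lam (x, y) = f (complex_of_real y - lam (x, y) * complex_of_real x))"

end

(*
  Write c = f y0. The equation lam (x, y) = f (y - lam (x, y) x) is the implicit form of the
  solution of Burgers' equation lam_x + lam lam_y = 0 with lam (0, y) = f y: y - lam x is the foot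
  on the line x = 0 of the characteristic of speed lam through (x, y). Near y0 the map f is
  Lipschitz, and changing l moves the foot y - l x only by a multiple of x, so for (x, y) close to
  (0, y0) the map l \<mapsto> f (y - l x) sends the closed unit disc around c into the disc of
  radius 1/2 and is a 1/2-contraction there; its fixed point is lam (x, y). Smoothness comes from
  the inverse function theorem applied to (p, l) \<mapsto> (p, l - f (y - l x)), whose derivative
  in l is multiplication by 1 + x f', which stays away from 0. Uniqueness: a continuous solution
  mu starts at mu (0, y0) = c and can never reach the circle |l - c| = 1, because inside the
  closed disc the equation puts it within 1/2 of c; by connectedness it stays in the disc, where
  the fixed point is unique.
*)

theory Submission
  imports Defs "HOL-Complex_Analysis.Complex_Analysis"
begin

lemma C1_onI:
  fixes g :: "'a::euclidean_space \<Rightarrow> 'b::real_normed_vector"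
  assumes deriv: "\<And>p. p \<in> S \<Longrightarrow> (g has_derivative D p) (at p)"
    and cont: "\<And>i. i \<in> Basis \<Longrightarrow> continuous_on S (\<lambda>p. D p i)"
  shows "C1_on S g"
  unfolding C1_on_def
proof (intro exI conjI ballI)
  have lin: "bounded_linear (D p)" if "p \<in> S" for p
    using deriv[OF that] by (rule has_derivative_bounded_linear)
  show "(g has_derivative blinfun_apply (Blinfun (D p))) (at p)" if "p \<in> S" for p
    using deriv[OF that] lin[OF that] by (simp add: bounded_linear_Blinfun_apply)
  show "continuous_on S (\<lambda>p. Blinfun (D p))"
  proof (rule continuous_on_blinfun_componentwise)
    fix i :: 'a assume "i \<in> Basis"
    then show "continuous_on S (\<lambda>p. blinfun_apply (Blinfun (D p)) i)"
      by (rule continuous_on_eq[OF cont]) (simp add: lin bounded_linear_Blinfun_apply)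
  qed
qed

lemma C1_on_imp_continuous_on: "C1_on S g \<Longrightarrow> continuous_on S g"
  unfolding C1_on_def
  by (metis continuous_at_imp_continuous_on has_derivative_continuous)

lemma connected_image_subset_ball:
  fixes \<mu> :: "'a::topological_space \<Rightarrow> 'b::metric_space"
  assumes "connected S" "continuous_on S \<mu>" "q0 \<in> S" "\<mu> q0 \<in> cball c \<rho>"
    and no_sphere: "\<And>q. q \<in> S \<Longrightarrow> \<mu> q \<in> cball c \<rho> \<Longrightarrow> \<mu> q \<in> ball c \<rho>"
  shows "\<mu> ` S \<subseteq> ball c \<rho>"
proof -
  have "connected (\<mu> ` S)"
    using assms(2,1) by (rule connected_continuous_image)
  moreover have "\<mu> ` S \<subseteq> ball c \<rho> \<union> - cball c \<rho>"
    using no_sphere by blast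
  moreover have "ball c \<rho> \<inter> - cball c \<rho> \<inter> \<mu> ` S = {}"
    by auto
  ultimately have "ball c \<rho> \<inter> \<mu> ` S = {} \<or> - cball c \<rho> \<inter> \<mu> ` S = {}"
    by (intro connectedD) auto
  moreover have "\<mu> q0 \<in> ball c \<rho> \<inter> \<mu> ` S"
    using assms(3,4) no_sphere by blast
  ultimately have "- cball c \<rho> \<inter> \<mu> ` S = {}"
    by blast
  then show ?thesis
    using no_sphere by blast
qed

text \<open>No continuity of \<open>lam\<close> is assumed: \<open>has_derivative_inverse_strong\<close> obtains the
  continuity of the inverse of \<open>(p, l) \<mapsto> (p, \<Phi> (p, l))\<close> from invariance of domain.\<close>

lemma implicit_function_has_derivative:
  fixes \<Phi> :: "'a::euclidean_space \<times> 'b::{euclidean_space, real_normed_field} \<Rightarrow> 'b"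
  assumes "open \<Omega>" "open V" and cont: "continuous_on (\<Omega> \<times> V) \<Phi>"
    and inj: "\<And>q. q \<in> \<Omega> \<Longrightarrow> inj_on (\<lambda>l. \<Phi> (q, l)) V"
    and lam_in: "\<And>q. q \<in> \<Omega> \<Longrightarrow> lam q \<in> V"
    and lam_zero: "\<And>q. q \<in> \<Omega> \<Longrightarrow> \<Phi> (q, lam q) = 0"
    and "p \<in> \<Omega>"
    and deriv: "(\<Phi> has_derivative (\<lambda>(h, k). A h + a * k)) (at (p, lam p))"
    and "a \<noteq> 0"
  shows "(lam has_derivative (\<lambda>h. - A h / a)) (at p)"
proof -
  define S where "S = \<Omega> \<times> V"
  define \<Psi> where "\<Psi> z = (fst z, \<Phi> z)" for z
  define g where "g = inv_into S \<Psi>"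
  have "inj_on \<Psi> S"
    using inj by (fastforce simp: inj_on_def \<Psi>_def S_def)
  then have g\<Psi>: "g (\<Psi> z) = z" if "z \<in> S" for z
    using that by (simp add: g_def)
  have g_lam: "g (q, 0) = (q, lam q)" if "q \<in> \<Omega>" for q
    using g\<Psi>[of "(q, lam q)"] that lam_in lam_zero by (simp add: \<Psi>_def S_def)
  have "(\<Psi> has_derivative (\<lambda>(h, k). (h, A h + a * k))) (at (p, lam p))"
    unfolding \<Psi>_def
    by (rule has_derivative_eq_rhs[OF has_derivative_Pair[OF has_derivative_fst[OF has_derivative_ident] deriv]])
      (auto simp: fun_eq_iff)
  moreover have "(\<lambda>(h, k). (h, A h + a * k)) \<circ> (\<lambda>(h, k). (h, (k - A h) / a)) = id"
    using \<open>a \<noteq> 0\<close> by (auto simp: fun_eq_iff)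
  moreover have "continuous_on S \<Psi>"
    unfolding \<Psi>_def S_def by (intro continuous_intros cont)
  moreover have "open S" "(p, lam p) \<in> S"
    using assms(1,2,7) lam_in by (auto simp: S_def open_Times)
  ultimately have "(g has_derivative (\<lambda>(h, k). (h, (k - A h) / a))) (at (\<Psi> (p, lam p)))"
    using g\<Psi> by (intro has_derivative_inverse_strong[of S "(p, lam p)" \<Psi> g])
  then have "(g has_derivative (\<lambda>(h, k). (h, (k - A h) / a))) (at (p, 0))"
    using lam_zero[OF \<open>p \<in> \<Omega>\<close>] by (simp add: \<Psi>_def)
  then have "((\<lambda>q. g (q, 0)) has_derivative (\<lambda>h. (h, - A h / a))) (at p)"
    using has_derivative_compose[OF has_derivative_Pair[OF has_derivative_ident has_derivative_const[of 0]]]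
    by fastforce
  then have "((\<lambda>q. snd (g (q, 0))) has_derivative (\<lambda>h. - A h / a)) (at p)"
    using has_derivative_snd by fastforce
  then show ?thesis
    by (rule has_derivative_transform_within_open[OF _ \<open>open \<Omega>\<close> \<open>p \<in> \<Omega>\<close>])
      (simp add: g_lam)
qed

lemma holomorphic_lipschitz_on_cball:
  assumes "f holomorphic_on U" "open U" "z0 \<in> U"
  obtains e M where "e > 0" "M > 0" "cball z0 e \<subseteq> U"
    and "\<And>z. z \<in> cball z0 e \<Longrightarrow> norm (deriv f z) \<le> M"
    and "\<And>z1 z2. z1 \<in> cball z0 e \<Longrightarrow> z2 \<in> cball z0 e \<Longrightarrow> norm (f z1 - f z2) \<le> M * norm (z1 - z2)"
proof -
  obtain e where e: "e > 0" "cball z0 e \<subseteq> U"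
    using assms(2,3) open_contains_cball by blast
  have "continuous_on (cball z0 e) (deriv f)"
    using holomorphic_deriv[OF assms(1,2)] holomorphic_on_imp_continuous_on e(2)
    by (blast intro: continuous_on_subset)
  then have "bounded (deriv f ` cball z0 e)"
    by (intro compact_imp_bounded compact_continuous_image) auto
  then obtain M where M: "M > 0" "\<And>z. z \<in> cball z0 e \<Longrightarrow> norm (deriv f z) \<le> M"
    unfolding bounded_pos by blast
  have "norm (f z1 - f z2) \<le> M * norm (z1 - z2)" if "z1 \<in> cball z0 e" "z2 \<in> cball z0 e" for z1 z2
    by (rule field_differentiable_bound[of "cball z0 e" f "deriv f"])
      (use that M e assms in \<open>auto intro!: holomorphic_derivI\<close>)
  with that e M show ?thesis
    by blast
qed

definition char_foot :: "real \<times> real \<Rightarrow> complex \<Rightarrow> complex" where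
  "char_foot p l = complex_of_real (snd p) - l * complex_of_real (fst p)"

lemma norm_char_foot_minus_le:
  "norm (char_foot p l - complex_of_real y0) \<le> (1 + norm l) * dist p (0, y0)"
proof -
  have "char_foot p l - complex_of_real y0 = complex_of_real (snd p - y0) - l * complex_of_real (fst p)"
    by (simp add: char_foot_def)
  then have "norm (char_foot p l - complex_of_real y0) \<le> \<bar>snd p - y0\<bar> + norm l * \<bar>fst p\<bar>"
    by (metis norm_mult norm_of_real norm_triangle_ineq4)
  also have "\<dots> \<le> dist p (0, y0) + norm l * dist p (0, y0)"
    using dist_fst_le[of p "(0, y0)"] dist_snd_le[of p "(0, y0)"]
    by (intro add_mono mult_left_mono) (auto simp: dist_real_def)
  finally show ?thesis
    by (simp add: algebra_simps)
qed

lemma char_foot_diff: "char_foot p l1 - char_foot p l2 = (l2 - l1) * complex_of_real (fst p)"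
  by (simp add: char_foot_def algebra_simps)

locale char_contraction =
  fixes f :: "complex \<Rightarrow> complex" and U :: "complex set" and y0 r :: real and c :: complex
  assumes open_U: "open U" and holo: "f holomorphic_on U"
    and centre: "f (complex_of_real y0) = c" and r_pos: "r > 0"
    and foot_in_U: "\<And>p l. p \<in> ball (0, y0) r \<Longrightarrow> l \<in> cball c 1 \<Longrightarrow> char_foot p l \<in> U"
    and foot_close: "\<And>p l. p \<in> ball (0, y0) r \<Longrightarrow> l \<in> cball c 1 \<Longrightarrow> dist (f (char_foot p l)) c \<le> 1/2"
    and foot_contract: "\<And>p l1 l2. p \<in> ball (0, y0) r \<Longrightarrow> l1 \<in> cball c 1 \<Longrightarrow> l2 \<in> cball c 1 \<Longrightarrow>
           dist (f (char_foot p l1)) (f (char_foot p l2)) \<le> 1/2 * dist l1 l2"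
    and deriv_small: "\<And>p l. p \<in> ball (0, y0) r \<Longrightarrow> l \<in> cball c 1 \<Longrightarrow>
           norm (complex_of_real (fst p) * deriv f (char_foot p l)) \<le> 1/2"

lemma char_contractionI:
  assumes "open U" "f holomorphic_on U" "f (complex_of_real y0) = c" "r > 0"
    and U: "cball (complex_of_real y0) e \<subseteq> U"
    and deriv_le: "\<And>z. z \<in> cball (complex_of_real y0) e \<Longrightarrow> norm (deriv f z) \<le> M"
    and lip: "\<And>z1 z2. z1 \<in> cball (complex_of_real y0) e \<Longrightarrow> z2 \<in> cball (complex_of_real y0) e \<Longrightarrow>
                norm (f z1 - f z2) \<le> M * norm (z1 - z2)"
    and e_ge: "(2 + norm c) * r \<le> e" and M_le: "M * ((2 + norm c) * r) \<le> 1/2"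
  shows "char_contraction f U y0 r c"
proof -
  define \<epsilon> where "\<epsilon> = (2 + norm c) * r"
  have "r \<le> \<epsilon>"
    using \<open>r > 0\<close> by (simp add: \<epsilon>_def)
  have "0 < \<epsilon>"
    using \<open>r > 0\<close> by (simp add: \<epsilon>_def add_pos_nonneg)
  then have y0_in: "complex_of_real y0 \<in> cball (complex_of_real y0) e"
    using e_ge by (simp add: \<epsilon>_def)
  have "0 \<le> M"
    using deriv_le[OF y0_in] norm_ge_zero order_trans by blast
  have foot: "char_foot p l \<in> cball (complex_of_real y0) \<epsilon>"
    if "p \<in> ball (0, y0) r" "l \<in> cball c 1" for p l
  proof -
    have "norm l \<le> 1 + norm c"
      using that(2) norm_triangle_sub[of l c] by (simp add: dist_norm norm_minus_commute)
    then have "(1 + norm l) * dist p (0, y0) \<le> \<epsilon>"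
      using that(1) unfolding \<epsilon>_def by (intro mult_mono) (auto simp: dist_commute)
    then show ?thesis
      using norm_char_foot_minus_le[of p l y0] by (simp add: dist_norm norm_minus_commute)
  qed
  then have foot_e: "char_foot p l \<in> cball (complex_of_real y0) e"
    if "p \<in> ball (0, y0) r" "l \<in> cball c 1" for p l
    using that e_ge by (fastforce simp: \<epsilon>_def)
  have x_small: "M * \<bar>fst p\<bar> \<le> 1/2" if "p \<in> ball (0, y0) r" for p
  proof -
    have "\<bar>fst p\<bar> \<le> \<epsilon>"
      using that dist_fst_le[of p "(0, y0)"] \<open>r \<le> \<epsilon>\<close> by (simp add: dist_commute)
    then show ?thesis
      using mult_left_mono[of "\<bar>fst p\<bar>" \<epsilon> M] \<open>0 \<le> M\<close> M_le by (simp add: \<epsilon>_def)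
  qed
  show ?thesis
  proof (unfold_locales)
    fix p :: "real \<times> real" and l assume pl: "p \<in> ball (0, y0) r" "l \<in> cball c 1"
    show "char_foot p l \<in> U"
      using foot_e[OF pl] U by blast
    have "norm (f (char_foot p l) - c) \<le> M * norm (char_foot p l - complex_of_real y0)"
      using lip[OF foot_e[OF pl] y0_in] assms(3) by simp
    also have "\<dots> \<le> M * \<epsilon>"
      using foot[OF pl] \<open>0 \<le> M\<close> by (intro mult_left_mono) (auto simp: dist_norm norm_minus_commute)
    finally show "dist (f (char_foot p l)) c \<le> 1/2"
      using M_le by (simp add: dist_norm \<epsilon>_def)
    have "norm (complex_of_real (fst p) * deriv f (char_foot p l)) \<le> \<bar>fst p\<bar> * M"
      using deriv_le[OF foot_e[OF pl]] by (simp add: norm_mult mult_left_mono)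
    then show "norm (complex_of_real (fst p) * deriv f (char_foot p l)) \<le> 1/2"
      using x_small[OF pl(1)] by (simp add: mult.commute)
  next
    fix p :: "real \<times> real" and l1 l2 assume pl: "p \<in> ball (0, y0) r" "l1 \<in> cball c 1" "l2 \<in> cball c 1"
    from lip[OF foot_e[OF pl(1,2)] foot_e[OF pl(1,3)]]
    have "norm (f (char_foot p l1) - f (char_foot p l2)) \<le> M * norm ((l2 - l1) * complex_of_real (fst p))"
      by (simp only: char_foot_diff)
    also have "\<dots> = (M * \<bar>fst p\<bar>) * norm (l1 - l2)"
      by (simp add: norm_mult norm_minus_commute)
    also have "\<dots> \<le> 1/2 * norm (l1 - l2)"
      using x_small[OF pl(1)] by (intro mult_right_mono) auto
    finally show "dist (f (char_foot p l1)) (f (char_foot p l2)) \<le> 1/2 * dist l1 l2"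
      by (simp add: dist_norm)
  qed (use assms in auto)
qed

lemma char_contraction_exists:
  assumes "f holomorphic_on U" "open U" "complex_of_real y0 \<in> U"
  obtains r where "char_contraction f U y0 r (f (complex_of_real y0))"
proof -
  define c where "c = f (complex_of_real y0)"
  obtain e M where "e > 0" "M > 0" and "cball (complex_of_real y0) e \<subseteq> U"
    and "\<And>z. z \<in> cball (complex_of_real y0) e \<Longrightarrow> norm (deriv f z) \<le> M"
    and "\<And>z1 z2. z1 \<in> cball (complex_of_real y0) e \<Longrightarrow> z2 \<in> cball (complex_of_real y0) e \<Longrightarrow>
           norm (f z1 - f z2) \<le> M * norm (z1 - z2)"
    using holomorphic_lipschitz_on_cball[OF assms(1-3)] by blast
  moreover define \<epsilon> where "\<epsilon> = min e (1 / (2 * M))"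
  moreover define r where "r = \<epsilon> / (2 + norm c)"
  moreover have "\<epsilon> > 0" "\<epsilon> \<le> e" "M * \<epsilon> \<le> 1/2"
    using \<open>e > 0\<close> \<open>M > 0\<close> by (auto simp: \<epsilon>_def min_def field_simps)
  moreover have "2 + norm c > 0"
    by (simp add: add_pos_nonneg)
  ultimately have "char_contraction f U y0 r c"
    using assms by (intro char_contractionI) (auto simp: c_def r_def)
  with that show ?thesis
    unfolding c_def .
qed

context char_contraction
begin

abbreviation \<Omega> :: "(real \<times> real) set" where
  "\<Omega> \<equiv> ball (0, y0) r"

lemma fixpoint_ex1:
  assumes "p \<in> \<Omega>"
  shows "\<exists>!l\<in>cball c 1. f (char_foot p l) = l"
proof (rule Banach_fix[where c = "1/2"])
  have "dist c (f (char_foot p l)) \<le> 1" if "l \<in> cball c 1" for l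
    using foot_close[OF assms that] by (simp add: dist_commute)
  then show "(\<lambda>l. f (char_foot p l)) ` cball c 1 \<subseteq> cball c 1"
    by auto
qed (use foot_contract[OF assms] in \<open>auto simp: complete_eq_closed\<close>)

definition lam :: "real \<times> real \<Rightarrow> complex" where
  "lam p = (THE l. l \<in> cball c 1 \<and> f (char_foot p l) = l)"

lemma lam_in_cball: "p \<in> \<Omega> \<Longrightarrow> lam p \<in> cball c 1"
  and lam_fixpoint: "p \<in> \<Omega> \<Longrightarrow> f (char_foot p (lam p)) = lam p"
  using theI'[OF fixpoint_ex1] unfolding lam_def by auto

lemma lam_unique: "p \<in> \<Omega> \<Longrightarrow> l \<in> cball c 1 \<Longrightarrow> f (char_foot p l) = l \<Longrightarrow> l = lam p"
  using fixpoint_ex1 lam_in_cball lam_fixpoint by blast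

lemma lam_in_ball: "p \<in> \<Omega> \<Longrightarrow> lam p \<in> ball c 1"
  using foot_close[OF _ lam_in_cball] lam_fixpoint by (fastforce simp: dist_commute)

lemma continuous_on_f_char_foot: "continuous_on (\<Omega> \<times> cball c 1) (\<lambda>z. f (char_foot (fst z) (snd z)))"
proof (rule continuous_on_compose2[OF holomorphic_on_imp_continuous_on[OF holo]])
  show "continuous_on (\<Omega> \<times> cball c 1) (\<lambda>z. char_foot (fst z) (snd z))"
    unfolding char_foot_def by (intro continuous_intros)
qed (auto intro: foot_in_U)

definition slope :: "real \<times> real \<Rightarrow> complex" where
  "slope p = deriv f (char_foot p (lam p))"

lemma slope_denominator_nonzero:
  assumes "p \<in> \<Omega>"
  shows "1 + complex_of_real (fst p) * slope p \<noteq> 0"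
proof
  assume "1 + complex_of_real (fst p) * slope p = 0"
  then have "norm (complex_of_real (fst p) * slope p) = 1"
    by (metis add_eq_0_iff norm_minus_cancel norm_one)
  then show False
    using deriv_small[OF assms lam_in_cball[OF assms]] by (simp add: slope_def)
qed

lemma has_derivative_f_char_foot:
  assumes "p \<in> \<Omega>" "l \<in> cball c 1"
  shows "((\<lambda>z. f (char_foot (fst z) (snd z))) has_derivative (\<lambda>(h, k). deriv f (char_foot p l) *
           (complex_of_real (snd h) - (k * complex_of_real (fst p) + l * complex_of_real (fst h))))) (at (p, l))"
proof -
  have foot: "((\<lambda>z. char_foot (fst z) (snd z)) has_derivative (\<lambda>(h, k). complex_of_real (snd h)
          - (k * complex_of_real (fst p) + l * complex_of_real (fst h)))) (at (p, l))"
    unfolding char_foot_def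
    by (auto intro!: derivative_eq_intros simp: case_prod_beta algebra_simps)
  have "(f has_derivative (\<lambda>u. deriv f (char_foot p l) * u)) (at (char_foot (fst (p, l)) (snd (p, l))))"
    using holomorphic_derivI[OF holo open_U foot_in_U[OF assms], of UNIV]
    by (simp add: has_field_derivative_def)
  from has_derivative_compose[OF foot this] show ?thesis
    by (simp add: case_prod_beta')
qed

lemma has_derivative_lam:
  assumes "p \<in> \<Omega>"
  shows "(lam has_derivative (\<lambda>h. slope p * (complex_of_real (snd h) - lam p * complex_of_real (fst h))
           / (1 + complex_of_real (fst p) * slope p))) (at p)"
proof -
  define d where "d = slope p"
  define \<Phi> where "\<Phi> z = snd z - f (char_foot (fst z) (snd z))" for z :: "(real \<times> real) \<times> complex"
  define A where "A h = - d * (complex_of_real (snd h) - lam p * complex_of_real (fst h))" for h :: "real \<times> real"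
  have "continuous_on (\<Omega> \<times> ball c 1) \<Phi>"
    unfolding \<Phi>_def using continuous_on_f_char_foot
    by (intro continuous_intros) (auto elim: continuous_on_subset)
  moreover have "inj_on (\<lambda>l. \<Phi> (q, l)) (ball c 1)" if "q \<in> \<Omega>" for q
  proof (rule inj_onI)
    fix l1 l2 assume l: "l1 \<in> ball c 1" "l2 \<in> ball c 1" "\<Phi> (q, l1) = \<Phi> (q, l2)"
    then have "l1 - f (char_foot q l1) = l2 - f (char_foot q l2)"
      by (simp only: \<Phi>_def fst_conv snd_conv)
    then have "l1 - l2 = f (char_foot q l1) - f (char_foot q l2)"
      by (simp add: algebra_simps)
    then have "dist l1 l2 = dist (f (char_foot q l1)) (f (char_foot q l2))"
      by (simp add: dist_norm)
    also have "\<dots> \<le> 1/2 * dist l1 l2"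
      using foot_contract[OF that] l by auto
    finally show "l1 = l2"
      by simp
  qed
  moreover have "\<Phi> (q, lam q) = 0" if "q \<in> \<Omega>" for q
    using lam_fixpoint[OF that] by (simp add: \<Phi>_def)
  moreover have "(\<Phi> has_derivative (\<lambda>(h, k). A h + (1 + complex_of_real (fst p) * d) * k)) (at (p, lam p))"
    unfolding \<Phi>_def A_def d_def
    using has_derivative_f_char_foot[OF assms lam_in_cball[OF assms]]
    by (auto intro!: derivative_eq_intros simp: case_prod_beta slope_def algebra_simps)
  moreover have "1 + complex_of_real (fst p) * d \<noteq> 0"
    using slope_denominator_nonzero[OF assms] by (simp add: d_def)
  ultimately have "(lam has_derivative (\<lambda>h. - A h / (1 + complex_of_real (fst p) * d))) (at p)"
    using lam_in_ball assms by (intro implicit_function_has_derivative[where \<Phi> = \<Phi>]) auto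
  then show ?thesis
    by (simp add: A_def d_def)
qed

lemma continuous_on_lam: "continuous_on \<Omega> lam"
  by (intro continuous_at_imp_continuous_on ballI has_derivative_continuous[OF has_derivative_lam])

lemma continuous_on_slope: "continuous_on \<Omega> slope"
proof -
  have "continuous_on U (deriv f)"
    using holomorphic_deriv[OF holo open_U] by (rule holomorphic_on_imp_continuous_on)
  moreover have "continuous_on \<Omega> (\<lambda>p. char_foot p (lam p))"
    unfolding char_foot_def by (intro continuous_intros continuous_on_lam)
  moreover have "(\<lambda>p. char_foot p (lam p)) ` \<Omega> \<subseteq> U"
    using foot_in_U lam_in_cball by blast
  ultimately show ?thesis
    unfolding slope_def by (rule continuous_on_compose2)
qed

lemma C1_on_lam: "C1_on \<Omega> lam"
proof (rule C1_onI[OF has_derivative_lam])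
  show "continuous_on \<Omega> (\<lambda>p. slope p * (complex_of_real (snd i) - lam p * complex_of_real (fst i))
      / (1 + complex_of_real (fst p) * slope p))" for i :: "real \<times> real"
    using slope_denominator_nonzero
    by (intro continuous_intros continuous_on_lam continuous_on_slope) auto
qed

lemma lam_is_C1_solution:
  assumes "f ` U \<subseteq> upper_half_plane"
  shows "is_C1_solution f U \<Omega> lam"
  unfolding is_C1_solution_def
proof (intro conjI allI impI ballI C1_on_lam)
  fix p assume "p \<in> \<Omega>"
  then show "lam p \<in> upper_half_plane"
    using assms foot_in_U lam_in_cball lam_fixpoint by (metis image_subset_iff)
next
  fix x y assume "(x, y) \<in> \<Omega>"
  then show "complex_of_real y - lam (x, y) * complex_of_real x \<in> U"
    "lam (x, y) = f (complex_of_real y - lam (x, y) * complex_of_real x)"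
    using foot_in_U lam_in_cball lam_fixpoint by (auto simp: char_foot_def)
qed

lemma continuous_solution_unique:
  assumes "continuous_on \<Omega> \<mu>" and fix_\<mu>: "\<And>q. q \<in> \<Omega> \<Longrightarrow> f (char_foot q (\<mu> q)) = \<mu> q"
    and "p \<in> \<Omega>"
  shows "\<mu> p = lam p"
proof -
  have "(0, y0) \<in> \<Omega>"
    using r_pos by simp
  moreover have "\<mu> (0, y0) = c"
    using fix_\<mu>[OF \<open>(0, y0) \<in> \<Omega>\<close>] centre by (simp add: char_foot_def)
  moreover have "\<mu> q \<in> ball c 1" if "q \<in> \<Omega>" "\<mu> q \<in> cball c 1" for q
    using foot_close[OF that] fix_\<mu>[OF that(1)] by (simp add: dist_commute)
  ultimately have "\<mu> ` \<Omega> \<subseteq> ball c 1"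
    using assms(1) by (intro connected_image_subset_ball[of _ _ "(0, y0)"]) auto
  then have "\<mu> p \<in> cball c 1"
    using \<open>p \<in> \<Omega>\<close> ball_subset_cball by blast
  then show ?thesis
    using lam_unique[OF \<open>p \<in> \<Omega>\<close>] fix_\<mu>[OF \<open>p \<in> \<Omega>\<close>] by blast
qed

lemma C1_solution_unique:
  assumes "is_C1_solution f U \<Omega> \<mu>" "p \<in> \<Omega>"
  shows "\<mu> p = lam p"
proof (rule continuous_solution_unique[OF _ _ \<open>p \<in> \<Omega>\<close>])
  show "continuous_on \<Omega> \<mu>"
    using assms(1) C1_on_imp_continuous_on by (auto simp: is_C1_solution_def)
  show "f (char_foot q (\<mu> q)) = \<mu> q" if "q \<in> \<Omega>" for q
    using assms(1) that by (cases q) (auto simp: is_C1_solution_def char_foot_def)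
qed

end

theorem proposition2p4:
  fixes U :: "complex set" and f :: "complex \<Rightarrow> complex" and y0 :: real
  assumes "open U"
    and "f holomorphic_on U"
    and "f ` U \<subseteq> upper_half_plane"
    and "complex_of_real y0 \<in> U"
    and "f (complex_of_real y0) \<in> upper_half_plane"
  shows "\<exists>\<Omega> lam. open \<Omega> \<and> (0, y0) \<in> \<Omega> \<and> is_C1_solution f U \<Omega> lam \<and>
           (\<forall>mu. is_C1_solution f U \<Omega> mu \<longrightarrow> (\<forall>p\<in>\<Omega>. mu p = lam p))"
proof -
  \<comment> \<open>the last hypothesis is implied by the third and the fourth\<close>
  obtain r where "char_contraction f U y0 r (f (complex_of_real y0))"
    using char_contraction_exists[OF assms(2,1,4)] .
  then interpret char_contraction f U y0 r "f (complex_of_real y0)" .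
  show ?thesis
  proof (intro exI[of _ \<Omega>] exI[of _ lam] conjI allI impI ballI)
    show "open \<Omega>" "(0, y0) \<in> \<Omega>"
      using r_pos by auto
    show "is_C1_solution f U \<Omega> lam"
      using assms(3) by (rule lam_is_C1_solution)
    show "mu p = lam p" if "is_C1_solution f U \<Omega> mu" "p \<in> \<Omega>" for mu p
      using that by (rule C1_solution_unique)
  qed
qed

end
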